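(* Let $n\ge2$ and $G=C_n\oplus C_n$. Let $(e_1,e_2)$ be a basis of $G$, let $x_1,x_2\in[0,n-1]$, and let $S=e_1^{[n-1]}\cdot e_2^{[n-1]}\cdot(x_1e_1+x_2e_2)^{[n-1]}$. Then $0\notin\Sigma_{\le n}(S)$ if and only if $(-x_1k)_n+(-x_2k)_n+(k)_n>n$ for every $k\in[1,n-1]$.
   Context: $C_n$ is a cyclic group of order $n$; $[a,b]$ denotes the integer interval; for integers $x$ and $n\ge1$, $(x)_n\in[0,n-1]$ denotes the least non-negative residue of $x$ modulo $n$. A basis of $G$ is an ordered pair $(e_1,e_2)$ with $G=\langle e_1\rangle\oplus\langle e_2\rangle$. A sequence over $G$ is a finite unordered list (multiset) of elements, $g^{[t]}$ denotes $g$ repeated $t$ times and $\cdot$ denotes concatenation. $\Sigma_{\le N}(S)$ is the set of sums of the terms of subsequences $T$ of $S$ with $1\le |T|\le N$. *)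

theory Defs
  imports Main "HOL-Library.Multiset"
begin

definition grp :: "int \<Rightarrow> (int \<times> int) set" where
  "grp n = {0..<n} \<times> {0..<n}"

definition gadd :: "int \<Rightarrow> int \<times> int \<Rightarrow> int \<times> int \<Rightarrow> int \<times> int" where
  "gadd n g h = ((fst g + fst h) mod n, (snd g + snd h) mod n)"

definition gsmul :: "int \<Rightarrow> int \<Rightarrow> int \<times> int \<Rightarrow> int \<times> int" where
  "gsmul n k g = ((k * fst g) mod n, (k * snd g) mod n)"

definition cyc :: "int \<Rightarrow> int \<times> int \<Rightarrow> (int \<times> int) set" where
  "cyc n g = {gsmul n k g | k. True}"

definition is_basis :: "int \<Rightarrow> int \<times> int \<Rightarrow> int \<times> int \<Rightarrow> bool" where
  "is_basis n e1 e2 \<longleftrightarrow> e1 \<in> grp n \<and> e2 \<in> grp n \<and>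
     cyc n e1 \<inter> cyc n e2 = {(0,0)} \<and>
     {gadd n a b | a b. a \<in> cyc n e1 \<and> b \<in> cyc n e2} = grp n"

definition gsum :: "int \<Rightarrow> (int \<times> int) multiset \<Rightarrow> int \<times> int" where
  "gsum n T = ((\<Sum>x\<in>#T. fst x) mod n, (\<Sum>x\<in>#T. snd x) mod n)"

definition sigma_le :: "int \<Rightarrow> nat \<Rightarrow> (int \<times> int) multiset \<Rightarrow> (int \<times> int) set" where
  "sigma_le n N S = {gsum n T | T. T \<subseteq># S \<and> 1 \<le> size T \<and> size T \<le> N}"

end

theory Submission
  imports Defs
begin

text \<open>A subsequence of S has the form e1^[i] e2^[j] g^[k] with g = x1 e1 + x2 e2, and its sum is
(i + k x1) e1 + (j + k x2) e2. Both basis elements have order exactly n (G is the image of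
<e1> \<times> <e2>, so n^2 \<le> |<e1>| |<e2>|), hence the sum vanishes iff n divides i + k x1 and
j + k x2. For 0 \<le> i, j < n and a nonempty subsequence this forces k \<noteq> 0, i = (-x1 k)_n and
j = (-x2 k)_n, so a zero-sum subsequence of length at most n exists iff
(-x1 k)_n + (-x2 k)_n + k \<le> n for some k in [1, n-1].\<close>

lemma mult_mod_period:
  fixes n m k x :: int
  assumes "n dvd m * x"
  shows "(k * x) mod n = ((k mod m) * x) mod n"
proof -
  have "k * x = (k mod m) * x + (k div m) * (m * x)"
    by (metis div_mult_mod_eq add.commute distrib_right mult.assoc)
  moreover have "(k div m) * (m * x) mod n = 0" using assms by simp
  ultimately show ?thesis by (metis mod_add_right_eq add_0_right)
qed

lemma dvd_add_iff_eq_mod: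
  fixes n i c :: int
  assumes "0 \<le> i" "i < n"
  shows "n dvd i + c \<longleftrightarrow> i = (- c) mod n"
proof -
  have "i mod n = i" using assms by simp
  then show ?thesis by (metis mod_eq_dvd_iff diff_minus_eq_add)
qed

lemma mod_linear_combination:
  fixes n i j k x1 x2 a b :: int
  shows "(i * a + j * b + k * (((x1 * a) mod n + (x2 * b) mod n) mod n)) mod n
       = (((i + k * x1) * a) mod n + ((j + k * x2) * b) mod n) mod n"
proof -
  have "(i * a + j * b + k * (((x1 * a) mod n + (x2 * b) mod n) mod n)) mod n
      = (i * a + j * b + k * (x1 * a + x2 * b)) mod n"
    by (metis mod_add_eq mod_add_right_eq mod_mult_right_eq)
  also have "\<dots> = ((i + k * x1) * a + (j + k * x2) * b) mod n"
    by (simp add: algebra_simps)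
  finally show ?thesis by (simp add: mod_add_eq)
qed

lemma gadd_commute: "gadd n g h = gadd n h g"
  by (simp add: gadd_def add.commute)

lemma gsmul_self_eq_zero: "gsmul n n e = (0,0)"
  by (simp add: gsmul_def)

lemma card_grp: "card (grp n) = nat n * nat n"
  by (simp add: grp_def card_cartesian_product)

lemma cyc_subset_image:
  assumes "0 < m" "gsmul n m e = (0,0)"
  shows "cyc n e \<subseteq> (\<lambda>k. gsmul n k e) ` {0..<m}"
proof
  fix y assume "y \<in> cyc n e"
  then obtain k where y: "y = gsmul n k e" by (auto simp: cyc_def)
  have "n dvd m * fst e" "n dvd m * snd e"
    using assms(2) by (auto simp: gsmul_def dvd_eq_mod_eq_0)
  then have "y = gsmul n (k mod m) e"
    unfolding y gsmul_def by (metis mult_mod_period)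
  then show "y \<in> (\<lambda>k. gsmul n k e) ` {0..<m}" using assms(1) by simp
qed

lemma
  assumes "0 < m" "gsmul n m e = (0,0)"
  shows finite_cyc: "finite (cyc n e)" and card_cyc_le: "card (cyc n e) \<le> nat m"
proof -
  show "finite (cyc n e)"
    using cyc_subset_image[OF assms] by (rule finite_subset) simp
  have "card (cyc n e) \<le> card ((\<lambda>k. gsmul n k e) ` {0..<m})"
    using cyc_subset_image[OF assms] by (intro card_mono) auto
  also have "\<dots> \<le> nat m" using card_image_le[of "{0..<m}"] by simp
  finally show "card (cyc n e) \<le> nat m" .
qed

lemma gsum_replicates:
  "gsum n (replicate_mset i e1 + replicate_mset j e2
           + replicate_mset k (gadd n (gsmul n x1 e1) (gsmul n x2 e2)))
   = gadd n (gsmul n (int i + int k * x1) e1) (gsmul n (int j + int k * x2) e2)"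
  by (simp add: gsum_def gadd_def gsmul_def mod_linear_combination)

lemma basis_pos: "is_basis n e1 e2 \<Longrightarrow> 0 < n"
proof -
  assume "is_basis n e1 e2"
  then have "gadd n (0,0) (0,0) \<in> grp n"
    unfolding is_basis_def by blast
  then show ?thesis by (auto simp: grp_def gadd_def)
qed

lemma basis_swap: "is_basis n e1 e2 \<Longrightarrow> is_basis n e2 e1"
proof -
  have "{gadd n a b |a b. a \<in> X \<and> b \<in> Y} = {gadd n a b |a b. a \<in> Y \<and> b \<in> X}" for X Y
    using gadd_commute by blast
  then show "is_basis n e1 e2 \<Longrightarrow> is_basis n e2 e1"
    unfolding is_basis_def by (metis Int_commute)
qed

lemma basis_order_ge:
  assumes basis: "is_basis n e1 e2" and "0 < m" "gsmul n m e1 = (0,0)"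
  shows "n \<le> m"
proof -
  have "0 < n" using basis by (rule basis_pos)
  have "{gadd n a b |a b. a \<in> cyc n e1 \<and> b \<in> cyc n e2}
      = (\<lambda>(a,b). gadd n a b) ` (cyc n e1 \<times> cyc n e2)"
    by (auto simp: image_def)
  then have "grp n = (\<lambda>(a,b). gadd n a b) ` (cyc n e1 \<times> cyc n e2)"
    using basis unfolding is_basis_def by simp
  then have "nat n * nat n \<le> card (cyc n e1 \<times> cyc n e2)"
    by (metis card_grp card_image_le finite_SigmaI finite_cyc assms(2,3) \<open>0 < n\<close> gsmul_self_eq_zero)
  also have "\<dots> \<le> nat m * nat n"
    unfolding card_cartesian_product
    using card_cyc_le[OF assms(2,3)] card_cyc_le[OF \<open>0 < n\<close> gsmul_self_eq_zero]
    by (rule mult_mono) auto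
  finally show ?thesis using \<open>0 < n\<close> by simp
qed

lemma basis_smul_eq_zero_iff:
  assumes "is_basis n e1 e2"
  shows "gsmul n A e1 = (0,0) \<longleftrightarrow> n dvd A"
proof
  assume A: "gsmul n A e1 = (0,0)"
  have "0 < n" using assms by (rule basis_pos)
  have "gsmul n (A mod n) e1 = (0,0)"
    using A by (simp add: gsmul_def mod_mult_left_eq)
  then have "\<not> 0 < A mod n"
    using basis_order_ge[OF assms] \<open>0 < n\<close> by (meson pos_mod_bound not_less)
  then show "n dvd A"
    using \<open>0 < n\<close> by (simp add: dvd_eq_mod_eq_0 order_less_le)
qed (auto simp: gsmul_def)

lemma basis_independent:
  assumes basis: "is_basis n e1 e2"
  shows "gadd n (gsmul n A e1) (gsmul n B e2) = (0,0) \<longleftrightarrow> n dvd A \<and> n dvd B"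
proof
  assume "gadd n (gsmul n A e1) (gsmul n B e2) = (0,0)"
  then have "gsmul n A e1 = gsmul n (- B) e2"
    by (auto simp: gadd_def gsmul_def mod_add_eq mod_eq_dvd_iff dvd_eq_mod_eq_0[symmetric])
  moreover have "gsmul n A e1 \<in> cyc n e1" "gsmul n (- B) e2 \<in> cyc n e2"
    by (auto simp: cyc_def)
  ultimately have "gsmul n A e1 = (0,0)" "gsmul n (- B) e2 = (0,0)"
    using basis unfolding is_basis_def by auto
  then show "n dvd A \<and> n dvd B"
    using basis_smul_eq_zero_iff[OF basis] basis_smul_eq_zero_iff[OF basis_swap[OF basis]]
    by auto
qed (auto simp: gadd_def gsmul_def)

lemma mset_subset_eq_addE:
  assumes "T \<subseteq># A + B"
  obtains T1 T2 where "T1 \<subseteq># A" "T2 \<subseteq># B" "T = T1 + T2"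
proof
  show "T \<inter># A \<subseteq># A" by simp
  show "T - T \<inter># A \<subseteq># B"
    using assms by (auto simp: subseteq_mset_def min_def le_diff_conv add.commute)
  show "T = T \<inter># A + (T - T \<inter># A)"
    by (auto simp: multiset_eq_iff min_def)
qed

lemma subseteq_replicates_iff:
  "T \<subseteq># replicate_mset a u + replicate_mset b v + replicate_mset c w
   \<longleftrightarrow> (\<exists>i\<le>a. \<exists>j\<le>b. \<exists>k\<le>c. T = replicate_mset i u + replicate_mset j v + replicate_mset k w)"
proof
  assume "T \<subseteq># replicate_mset a u + replicate_mset b v + replicate_mset c w"
  then obtain T12 T3 where T: "T12 \<subseteq># replicate_mset a u + replicate_mset b v"
      "T3 \<subseteq># replicate_mset c w" "T = T12 + T3"
    by (rule mset_subset_eq_addE)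
  from T(1) obtain T1 T2 where T12: "T1 \<subseteq># replicate_mset a u"
      "T2 \<subseteq># replicate_mset b v" "T12 = T1 + T2"
    by (rule mset_subset_eq_addE)
  obtain i where "i \<le> a" "T1 = replicate_mset i u"
    using T12(1) by (rule msubseteq_replicate_msetE)
  moreover obtain j where "j \<le> b" "T2 = replicate_mset j v"
    using T12(2) by (rule msubseteq_replicate_msetE)
  moreover obtain k where "k \<le> c" "T3 = replicate_mset k w"
    using T(2) by (rule msubseteq_replicate_msetE)
  ultimately show "\<exists>i\<le>a. \<exists>j\<le>b. \<exists>k\<le>c. T = replicate_mset i u + replicate_mset j v + replicate_mset k w"
    using T(3) T12(3) by blast
qed (auto intro!: subset_mset.add_mono simp: replicate_mset_msubseteq_iff)

lemma sigma_le_replicates: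
  "sigma_le n N (replicate_mset a u + replicate_mset b v + replicate_mset c w)
   = {gsum n (replicate_mset i u + replicate_mset j v + replicate_mset k w) | i j k.
        i \<le> a \<and> j \<le> b \<and> k \<le> c \<and> 1 \<le> i + j + k \<and> i + j + k \<le> N}"
  unfolding sigma_le_def subseteq_replicates_iff by fastforce

lemma zero_in_sigma_le_iff:
  assumes "is_basis n e1 e2"
  shows "(0,0) \<in> sigma_le n N (replicate_mset a e1 + replicate_mset b e2
                                + replicate_mset c (gadd n (gsmul n x1 e1) (gsmul n x2 e2)))
     \<longleftrightarrow> (\<exists>i\<le>a. \<exists>j\<le>b. \<exists>k\<le>c. 1 \<le> i + j + k \<and> i + j + k \<le> N
                     \<and> n dvd int i + int k * x1 \<and> n dvd int j + int k * x2)"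
  unfolding sigma_le_replicates
  by (auto simp: gsum_replicates basis_independent[OF assms] eq_commute[of "(0,0)"])

lemma bounded_relation_iff_residue_sum_le:
  fixes n x1 x2 :: int
  assumes "1 \<le> n"
  shows "(\<exists>i\<le>nat (n-1). \<exists>j\<le>nat (n-1). \<exists>k\<le>nat (n-1). 1 \<le> i + j + k \<and> i + j + k \<le> nat n
            \<and> n dvd int i + int k * x1 \<and> n dvd int j + int k * x2)
     \<longleftrightarrow> (\<exists>k\<in>{1..n-1}. (-x1*k) mod n + (-x2*k) mod n + k mod n \<le> n)"
proof
  assume "\<exists>i\<le>nat (n-1). \<exists>j\<le>nat (n-1). \<exists>k\<le>nat (n-1). 1 \<le> i + j + k \<and> i + j + k \<le> nat n
            \<and> n dvd int i + int k * x1 \<and> n dvd int j + int k * x2"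
  then obtain i j k where ijk: "i \<le> nat (n-1)" "j \<le> nat (n-1)" "k \<le> nat (n-1)"
      "1 \<le> i + j + k" "i + j + k \<le> nat n"
      "n dvd int i + int k * x1" "n dvd int j + int k * x2"
    by blast
  have i: "int i = (-x1 * int k) mod n" and j: "int j = (-x2 * int k) mod n"
    using ijk assms by (simp_all add: dvd_add_iff_eq_mod mult.commute)
  have "k \<noteq> 0"
  proof
    assume "k = 0"
    then show False using ijk(4) i j by simp
  qed
  then show "\<exists>k\<in>{1..n-1}. (-x1*k) mod n + (-x2*k) mod n + k mod n \<le> n"
    using ijk(3,5) i j by (intro bexI[of _ "int k"]) auto
next
  assume "\<exists>k\<in>{1..n-1}. (-x1*k) mod n + (-x2*k) mod n + k mod n \<le> n"
  then obtain k where k: "k \<in> {1..n-1}" "(-x1*k) mod n + (-x2*k) mod n + k \<le> n"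
    by auto
  define i where "i = (-x1*k) mod n"
  define j where "j = (-x2*k) mod n"
  have "0 \<le> i" "i < n" "0 \<le> j" "j < n"
    using assms by (simp_all add: i_def j_def)
  moreover have "n dvd i + k * x1" "n dvd j + k * x2"
    using calculation by (simp_all add: dvd_add_iff_eq_mod i_def j_def mult.commute)
  moreover have "i + j + k \<le> n"
    using k(2) by (simp add: i_def j_def)
  ultimately have "nat i \<le> nat (n-1) \<and> nat j \<le> nat (n-1) \<and> nat k \<le> nat (n-1)
      \<and> 1 \<le> nat i + nat j + nat k \<and> nat i + nat j + nat k \<le> nat n
      \<and> n dvd int (nat i) + int (nat k) * x1 \<and> n dvd int (nat j) + int (nat k) * x2"
    using k(1) by auto
  then show "\<exists>i\<le>nat (n-1). \<exists>j\<le>nat (n-1). \<exists>k\<le>nat (n-1). 1 \<le> i + j + k \<and> i + j + k \<le> nat n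
            \<and> n dvd int i + int k * x1 \<and> n dvd int j + int k * x2"
    by (elim conjE, intro exI conjI)
qed

theorem lemma2p1:
  fixes n x1 x2 :: int and e1 e2 :: "int \<times> int"
  assumes "n \<ge> 2"
    and "is_basis n e1 e2"
    and "x1 \<in> {0..n-1}" and "x2 \<in> {0..n-1}"
  shows "(0,0) \<notin> sigma_le n (nat n)
            (replicate_mset (nat (n-1)) e1 + replicate_mset (nat (n-1)) e2
             + replicate_mset (nat (n-1)) (gadd n (gsmul n x1 e1) (gsmul n x2 e2)))
         \<longleftrightarrow> (\<forall>k\<in>{1..n-1}. (-x1*k) mod n + (-x2*k) mod n + k mod n > n)"
proof -
  have "1 \<le> n" using assms(1) by simp
  then show ?thesis
    unfolding zero_in_sigma_le_iff[OF assms(2)] bounded_relation_iff_residue_sum_le[OF \<open>1 \<le> n\<close>]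
    by (simp add: not_le)
qed

end
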